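(* Let $U$ take values in a finite set $\mathcal{U}$ with $|\mathcal{U}|=L\ge2$ and let $Q$ take values in a finite alphabet. Then \[Z^{(L)}(U|Q)^2\le H^{(L)}(U|Q)\le\log_L\big(1+(L-1)Z^{(L)}(U|Q)\big),\qquad 1-Z^{(L)}(U|Q)\le K^{(L)}(U|Q)\le\sqrt{1-Z^{(L)}(U|Q)^2}.\]
   Context: With $P_Q$ and $P_{U|Q}$ the marginal and conditional laws, and sums over $u'\ne u$ ranging over ordered pairs $(u,u')\in\mathcal{U}^2$ with $u'\neq u$: $Z^{(L)}(U|Q)=\sum_q\sum_{u'\ne u}\frac{P_Q(q)}{L-1}\sqrt{P_{U|Q}(u|q)P_{U|Q}(u'|q)}$; $K^{(L)}(U|Q)=\sum_q\sum_{u'\ne u}\frac{P_Q(q)}{L-1}\cdot\frac{|P_{U|Q}(u|q)-P_{U|Q}(u'|q)|}{2}$; $H^{(L)}(U|Q)=-\sum_q\sum_uP_Q(q)P_{U|Q}(u|q)\log_LP_{U|Q}(u|q)$. *)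

theory Defs
  imports "HOL-Analysis.Analysis"
begin

text \<open>The alphabet of U is the finite set UU with L = card UU; the alphabet of Q is QQ.
  PQ is the marginal law of Q, W q u = P_{U|Q}(u|q).\<close>

definition Zcond :: "'u set \<Rightarrow> 'q set \<Rightarrow> ('q \<Rightarrow> real) \<Rightarrow> ('q \<Rightarrow> 'u \<Rightarrow> real) \<Rightarrow> real" where
  "Zcond UU QQ PQ W =
     (\<Sum>q\<in>QQ. \<Sum>(u, u')\<in>{(u, u'). u \<in> UU \<and> u' \<in> UU \<and> u' \<noteq> u}.
        PQ q / (real (card UU) - 1) * sqrt (W q u * W q u'))"

definition Kcond :: "'u set \<Rightarrow> 'q set \<Rightarrow> ('q \<Rightarrow> real) \<Rightarrow> ('q \<Rightarrow> 'u \<Rightarrow> real) \<Rightarrow> real" where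
  "Kcond UU QQ PQ W =
     (\<Sum>q\<in>QQ. \<Sum>(u, u')\<in>{(u, u'). u \<in> UU \<and> u' \<in> UU \<and> u' \<noteq> u}.
        PQ q / (real (card UU) - 1) * (\<bar>W q u - W q u'\<bar> / 2))"

text \<open>Convention 0 log 0 = 0 holds automatically since log b 0 = 0 in Isabelle.\<close>
definition Hcond :: "'u set \<Rightarrow> 'q set \<Rightarrow> ('q \<Rightarrow> real) \<Rightarrow> ('q \<Rightarrow> 'u \<Rightarrow> real) \<Rightarrow> real" where
  "Hcond UU QQ PQ W =
     - (\<Sum>q\<in>QQ. \<Sum>u\<in>UU. PQ q * W q u * log (real (card UU)) (W q u))"

end

theory Submission
  imports Defs
begin

(* For one distribution p on L letters put Y = sum_{u<>u'} sqrt (p u p u') and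
   X = sum_{u<>u'} |p u - p u'| / 2.  Each pair contributes the planar vector
   (|a - b| / 2, sqrt (a b)), whose coordinates sum to at least (a + b) / 2 and whose length
   is exactly (a + b) / 2; summing gives X + Y >= L - 1 and, by the triangle inequality,
   X^2 + Y^2 <= (L - 1)^2.
   Since (sum sqrt p)^2 = 1 + Y, Gibbs' inequality against the distribution proportional to sqrt p
   gives H <= ln (1 + Y).  Cauchy-Schwarz gives Y^2 <= (L - 1) H sum (1 - p u) / (- ln p u), and
   (1 - p) / (- ln p) is the integral of p^s over [0, 1], so the weights sum to at most the integral
   of L^(1 - s), i.e. (L - 1) / ln L.  Averaging over Q, Jensen's inequality for the convex square
   and the concave logarithm carries all four bounds to the conditional quantities. *)

abbreviation off_diagonal :: "'a set \<Rightarrow> ('a \<times> 'a) set" where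
  "off_diagonal A \<equiv> {(u, u'). u \<in> A \<and> u' \<in> A \<and> u' \<noteq> u}"

lemma sum_off_diagonal:
  assumes "finite A"
  shows "(\<Sum>(u, u')\<in>off_diagonal A. f u u') = (\<Sum>u\<in>A. \<Sum>u'\<in>A - {u}. f u u')"
proof -
  have "off_diagonal A = Sigma A (\<lambda>u. A - {u})" by auto
  then show ?thesis using assms by (simp add: sum.Sigma)
qed

lemma sum_off_diagonal_swap:
  "(\<Sum>(u, u')\<in>off_diagonal A. f u u') = (\<Sum>(u, u')\<in>off_diagonal A. f u' u)"
  by (rule sum.reindex_bij_witness[where i = prod.swap and j = prod.swap]) auto

lemma sum_off_diagonal_fst:
  assumes "finite A"
  shows "(\<Sum>(u, u')\<in>off_diagonal A. g u) = (real (card A) - 1) * sum g A"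
proof -
  have "(\<Sum>u'\<in>A - {u}. g u) = (real (card A) - 1) * g u" if "u \<in> A" for u
  proof -
    have "card A \<ge> 1" using assms that by (metis One_nat_def Suc_leI card_gt_0_iff empty_iff)
    then show ?thesis using assms that by (simp add: of_nat_diff)
  qed
  then show ?thesis
    unfolding sum_off_diagonal[OF assms] sum_distrib_left by (rule sum.cong[OF refl])
qed

lemma has_integral_powr_exponent:
  fixes x :: real
  assumes "0 < x" "x \<noteq> 1"
  shows "((\<lambda>s. x powr s) has_integral (x - 1) / ln x) {0..1}"
proof -
  have "((\<lambda>s. x powr s / ln x) has_real_derivative x powr s) (at s)" for s
    using assms by (auto intro!: derivative_eq_intros)
  then have "((\<lambda>s. x powr s) has_integral (x powr 1 / ln x - x powr 0 / ln x)) {0..1}"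
    by (intro fundamental_theorem_of_calculus)
      (auto simp: has_real_derivative_iff_has_vector_derivative[symmetric]
        intro: has_field_derivative_at_within)
  then show ?thesis
    using assms by (simp add: diff_divide_distrib)
qed

(* At x = 0 and x = 1 the left-hand side is 0, as ln 0 = 0 and division by 0 yields 0. *)
lemma integral_powr_exponent_ge:
  fixes x :: real
  assumes "0 \<le> x" "x \<le> 1"
  shows "(\<lambda>s. x powr s) integrable_on {0..1}
    \<and> (1 - x) / - ln x \<le> integral {0..1} (\<lambda>s. x powr s)"
proof -
  consider "x = 0" | "x = 1" | "0 < x" "x < 1" using assms by linarith
  then show ?thesis
  proof cases
    case 3
    have "(x - 1) / ln x = (1 - x) / - ln x"
      by (metis minus_diff_eq minus_divide_divide)
    then have "((\<lambda>s. x powr s) has_integral (1 - x) / - ln x) {0..1}"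
      using has_integral_powr_exponent[of x] 3 by simp
    then show ?thesis by (simp add: has_integral_integrable integral_unique)
  qed (simp_all add: integrable_const_ivl)
qed

definition pairwise_affinity :: "'a set \<Rightarrow> ('a \<Rightarrow> real) \<Rightarrow> real" where
  "pairwise_affinity A p = (\<Sum>(u, u')\<in>off_diagonal A. sqrt (p u * p u'))"

definition pairwise_distance :: "'a set \<Rightarrow> ('a \<Rightarrow> real) \<Rightarrow> real" where
  "pairwise_distance A p = (\<Sum>(u, u')\<in>off_diagonal A. \<bar>p u - p u'\<bar> / 2)"

definition shannon_entropy :: "'a set \<Rightarrow> ('a \<Rightarrow> real) \<Rightarrow> real" where
  "shannon_entropy A p = - (\<Sum>u\<in>A. p u * ln (p u))"

locale prob_vector =
  fixes A :: "'a set" and p :: "'a \<Rightarrow> real"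
  assumes finite: "finite A"
    and nonneg: "\<And>u. u \<in> A \<Longrightarrow> p u \<ge> 0"
    and sum_eq_1: "sum p A = 1"
begin

lemma nonempty: "A \<noteq> {}"
  using sum_eq_1 by auto

lemma le_one: "u \<in> A \<Longrightarrow> p u \<le> 1"
  using member_le_sum[of u A p] nonneg finite sum_eq_1 by auto

lemma add_le_one:
  assumes "u \<in> A" "u' \<in> A" "u' \<noteq> u"
  shows "p u + p u' \<le> 1"
proof -
  have "sum p {u, u'} \<le> sum p A"
    using assms finite nonneg by (intro sum_mono2) auto
  then show ?thesis using assms sum_eq_1 by simp
qed

lemma sum_off_diagonal_mean: "(\<Sum>(u, u')\<in>off_diagonal A. (p u + p u') / 2) = real (card A) - 1"
proof -
  have "(\<Sum>(u, u')\<in>off_diagonal A. (p u + p u') / 2)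
      = ((\<Sum>(u, u')\<in>off_diagonal A. p u) + (\<Sum>(u, u')\<in>off_diagonal A. p u')) / 2"
    by (simp add: split_def sum.distrib flip: sum_divide_distrib)
  also have "\<dots> = (\<Sum>(u, u')\<in>off_diagonal A. p u)"
    using sum_off_diagonal_swap[of "\<lambda>u u'. p u" A] by simp
  finally show ?thesis
    by (simp add: sum_off_diagonal_fst[OF finite] sum_eq_1)
qed

lemma card_minus_one_le_distance_plus_affinity:
  "real (card A) - 1 \<le> pairwise_distance A p + pairwise_affinity A p"
proof -
  have "(a + b) / 2 \<le> \<bar>a - b\<bar> / 2 + sqrt (a * b)" if "0 \<le> a" "0 \<le> b" for a b :: real
  proof -
    have "min a b \<le> sqrt (a * b)"
      using that real_sqrt_le_mono[of "min a b * min a b" "a * b"]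
      by (simp add: min_def mult_mono)
    then show ?thesis by (auto simp: min_def abs_if split: if_splits)
  qed
  then have "real (card A) - 1
      \<le> (\<Sum>(u, u')\<in>off_diagonal A. \<bar>p u - p u'\<bar> / 2 + sqrt (p u * p u'))"
    unfolding sum_off_diagonal_mean[symmetric] using nonneg by (intro sum_mono) auto
  then show ?thesis
    by (simp add: pairwise_distance_def pairwise_affinity_def split_def sum.distrib)
qed

lemma distance_sq_plus_affinity_sq_le:
  "(pairwise_distance A p)\<^sup>2 + (pairwise_affinity A p)\<^sup>2 \<le> (real (card A) - 1)\<^sup>2"
proof -
  define w where "w = (\<lambda>(u, u'). Complex (\<bar>p u - p u'\<bar> / 2) (sqrt (p u * p u')))"
  have "norm (w (u, u')) = (p u + p u') / 2" if "u \<in> A" "u' \<in> A" for u u'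
  proof -
    have "(\<bar>p u - p u'\<bar> / 2)\<^sup>2 + (sqrt (p u * p u'))\<^sup>2 = ((p u + p u') / 2)\<^sup>2"
      using nonneg that by (simp add: power_divide) (simp add: power2_eq_square field_simps)
    then show ?thesis
      using nonneg that by (simp add: w_def complex_norm)
  qed
  then have norms: "(\<Sum>x\<in>off_diagonal A. norm (w x)) = real (card A) - 1"
    unfolding sum_off_diagonal_mean[symmetric] by (intro sum.cong) auto
  have "sum w (off_diagonal A) = Complex (pairwise_distance A p) (pairwise_affinity A p)"
    unfolding pairwise_distance_def pairwise_affinity_def w_def
    by (simp add: complex_eq_iff Re_sum Im_sum split_def)
  then have "sqrt ((pairwise_distance A p)\<^sup>2 + (pairwise_affinity A p)\<^sup>2) \<le> real (card A) - 1"
    using norm_sum[of w "off_diagonal A"] by (simp add: complex_norm norms)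
  then show ?thesis
    by (metis add_nonneg_nonneg power_mono real_sqrt_ge_zero real_sqrt_pow2 zero_le_power2)
qed

lemma affinity_nonneg: "pairwise_affinity A p \<ge> 0"
  unfolding pairwise_affinity_def using nonneg by (auto intro!: sum_nonneg)

lemma sum_sqrt_squared: "(\<Sum>u\<in>A. sqrt (p u))\<^sup>2 = 1 + pairwise_affinity A p"
proof -
  have "(\<Sum>u'\<in>A. sqrt (p u) * sqrt (p u')) = p u + (\<Sum>u'\<in>A - {u}. sqrt (p u * p u'))"
    if "u \<in> A" for u
    using that finite nonneg by (simp add: sum.remove real_sqrt_mult)
  then have "(\<Sum>u\<in>A. sqrt (p u))\<^sup>2 = (\<Sum>u\<in>A. p u + (\<Sum>u'\<in>A - {u}. sqrt (p u * p u')))"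
    by (simp add: power2_eq_square sum_product)
  also have "\<dots> = 1 + pairwise_affinity A p"
    by (simp add: sum.distrib sum_eq_1 pairwise_affinity_def sum_off_diagonal[OF finite])
  finally show ?thesis .
qed

lemma gibbs_inequality:
  assumes "\<And>u. u \<in> A \<Longrightarrow> q u \<ge> 0" "sum q A \<le> 1"
    and "\<And>u. u \<in> A \<Longrightarrow> p u > 0 \<Longrightarrow> q u > 0"
  shows "shannon_entropy A p \<le> - (\<Sum>u\<in>A. p u * ln (q u))"
proof -
  have "p u * ln (q u) - p u * ln (p u) \<le> q u - p u" if "u \<in> A" for u
  proof (cases "p u = 0")
    case False
    then have pos: "p u > 0" "q u > 0" using nonneg assms(3) that by force+
    then have "p u * ln (q u / p u) \<le> p u * (q u / p u - 1)"
      by (intro mult_left_mono ln_le_minus_one) auto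
    then show ?thesis using pos by (simp add: ln_div algebra_simps)
  qed (use assms(1) that in simp)
  then have "(\<Sum>u\<in>A. p u * ln (q u) - p u * ln (p u)) \<le> sum q A - sum p A"
    by (simp add: sum_subtractf[symmetric] sum_mono)
  then show ?thesis
    using assms(2) sum_eq_1 by (simp add: shannon_entropy_def sum_subtractf)
qed

lemma entropy_le_ln_one_plus_affinity:
  "shannon_entropy A p \<le> ln (1 + pairwise_affinity A p)"
proof -
  define S where "S = (\<Sum>u\<in>A. sqrt (p u))"
  have "S \<ge> 0" using nonneg by (simp add: S_def sum_nonneg)
  moreover have "S\<^sup>2 \<ge> 1"
    using sum_sqrt_squared affinity_nonneg by (simp add: S_def)
  ultimately have S_ge_1: "S \<ge> 1"
    by (metis abs_of_nonneg one_le_power real_sqrt_abs real_sqrt_ge_one)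
  have "shannon_entropy A p \<le> - (\<Sum>u\<in>A. p u * ln (sqrt (p u) / S))"
    using S_ge_1 nonneg
    by (intro gibbs_inequality) (auto simp: S_def sum_divide_distrib[symmetric])
  also have "\<dots> = shannon_entropy A p / 2 + ln S"
  proof -
    have "p u * ln (sqrt (p u) / S) = p u * ln (p u) / 2 - p u * ln S" if "u \<in> A" for u
      using S_ge_1 nonneg[OF that] by (cases "p u = 0") (auto simp: ln_div ln_sqrt algebra_simps)
    then show ?thesis
      by (simp add: shannon_entropy_def sum_subtractf sum_divide_distrib[symmetric]
          flip: sum_distrib_right) (simp add: sum_eq_1)
  qed
  finally have "shannon_entropy A p \<le> 2 * ln S" by simp
  also have "\<dots> = ln (1 + pairwise_affinity A p)"
    using S_ge_1 sum_sqrt_squared ln_realpow[of S 2] by (simp add: S_def)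
  finally show ?thesis .
qed

lemma ln_le_zero:
  assumes "u \<in> A"
  shows "ln (p u) \<le> 0"
proof (cases "p u = 0")
  case False
  then have "p u > 0" using nonneg[OF assms] by simp
  then show ?thesis using le_one[OF assms] by simp
qed simp

lemma entropy_nonneg: "shannon_entropy A p \<ge> 0"
  using nonneg ln_le_zero
  by (simp add: shannon_entropy_def sum_nonpos mult_nonneg_nonpos)

lemma sum_powr_le:
  assumes "0 \<le> s" "s \<le> 1"
  shows "(\<Sum>u\<in>A. p u powr s) \<le> real (card A) powr (1 - s)"
proof -
  define L where "L = real (card A)"
  have L_pos: "L > 0" using finite nonempty by (simp add: L_def card_gt_0_iff)
  have "L powr s * p u powr s \<le> s * L * p u + (1 - s)" if "u \<in> A" for u
  proof (cases "p u = 0")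
    case False
    then have "p u > 0" using nonneg that by force
    then have "(L * p u) powr s * 1 powr (1 - s) \<le> s * (L * p u) + (1 - s) * 1"
      using assms L_pos by (intro Youngs_inequality_0) auto
    then show ?thesis using \<open>p u > 0\<close> L_pos by (simp add: powr_mult mult.assoc)
  qed (use assms in simp)
  then have "L powr s * (\<Sum>u\<in>A. p u powr s) \<le> (\<Sum>u\<in>A. s * L * p u + (1 - s))"
    by (simp add: sum_distrib_left sum_mono)
  also have "\<dots> = L"
    by (simp add: sum.distrib flip: sum_distrib_left) (simp add: sum_eq_1 L_def algebra_simps)
  finally show ?thesis
    using L_pos by (simp add: L_def powr_diff field_simps)
qed

lemma sum_one_minus_div_neg_ln_le:
  assumes "card A \<ge> 2"
  shows "(\<Sum>u\<in>A. (1 - p u) / - ln (p u)) \<le> (real (card A) - 1) / ln (real (card A))"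
proof -
  define L where "L = real (card A)"
  have L: "L > 1" using assms by (simp add: L_def)
  have "((\<lambda>s. L * (1 / L) powr s) has_integral L * ((1 / L - 1) / ln (1 / L))) {0..1}"
    using L by (intro has_integral_mult_right has_integral_powr_exponent) auto
  moreover have "L * ((1 / L - 1) / ln (1 / L)) = (L - 1) / ln L"
    using L by (simp add: ln_div field_simps)
  moreover have "L * (1 / L) powr s = L powr (1 - s)" for s
    using L by (simp add: powr_diff powr_divide)
  ultimately have bound: "((\<lambda>s. L powr (1 - s)) has_integral (L - 1) / ln L) {0..1}"
    by simp
  have "(\<Sum>u\<in>A. (1 - p u) / - ln (p u)) \<le> (\<Sum>u\<in>A. integral {0..1} (\<lambda>s. p u powr s))"
    using integral_powr_exponent_ge nonneg le_one by (intro sum_mono) auto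
  also have "\<dots> = integral {0..1} (\<lambda>s. \<Sum>u\<in>A. p u powr s)"
    using integral_powr_exponent_ge nonneg le_one by (intro integral_sum[symmetric] finite) auto
  also have "\<dots> \<le> (L - 1) / ln L"
    using integral_powr_exponent_ge nonneg le_one finite bound sum_powr_le
    by (intro has_integral_le[OF integrable_integral bound])
      (auto simp: L_def intro!: integrable_sum)
  finally show ?thesis by (simp add: L_def)
qed

lemma affinity_sq_le_entropy:
  assumes "card A \<ge> 2"
  shows "(pairwise_affinity A p)\<^sup>2
    \<le> (real (card A) - 1)\<^sup>2 * shannon_entropy A p / ln (real (card A))"
proof -
  define a where "a = (\<lambda>(u, u'). sqrt (p u' / - ln (p u)))"
  define b where "b = (\<lambda>(u::'a, u'::'a). sqrt (p u * - ln (p u)))"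
  have "sqrt (p u * p u') = a (u, u') * b (u, u')" if "(u, u') \<in> off_diagonal A" for u u'
  proof -
    \<comment> \<open>At p u = 1, where ln (p u) = 0, the partner p u' vanishes.\<close>
    have "p u = 0 \<or> p u' = 0 \<or> (0 < p u \<and> p u < 1)"
      using that nonneg add_le_one by (force simp: le_less)
    then show ?thesis
      by (auto simp: a_def b_def simp flip: real_sqrt_mult)
  qed
  then have "pairwise_affinity A p = (\<Sum>x\<in>off_diagonal A. a x * b x)"
    unfolding pairwise_affinity_def by (intro sum.cong) auto
  then have "(pairwise_affinity A p)\<^sup>2
      \<le> (\<Sum>x\<in>off_diagonal A. (a x)\<^sup>2) * (\<Sum>x\<in>off_diagonal A. (b x)\<^sup>2)"
    by (simp add: Cauchy_Schwarz_ineq_sum)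
  also have "(\<Sum>x\<in>off_diagonal A. (a x)\<^sup>2) = (\<Sum>u\<in>A. (1 - p u) / - ln (p u))"
  proof -
    have "(\<Sum>x\<in>off_diagonal A. (a x)\<^sup>2) = (\<Sum>(u, u')\<in>off_diagonal A. p u' / - ln (p u))"
      using nonneg ln_le_zero by (intro sum.cong) (auto simp: a_def divide_nonneg_nonpos)
    also have "\<dots> = (\<Sum>u\<in>A. (1 - p u) / - ln (p u))"
      unfolding sum_off_diagonal[OF finite]
      using finite sum_eq_1
      by (intro sum.cong) (simp_all add: sum_diff1 sum_negf diff_divide_distrib flip: sum_divide_distrib)
    finally show ?thesis .
  qed
  also have "(\<Sum>x\<in>off_diagonal A. (b x)\<^sup>2) = (real (card A) - 1) * shannon_entropy A p"
  proof -
    have "(\<Sum>x\<in>off_diagonal A. (b x)\<^sup>2) = (\<Sum>(u, u')\<in>off_diagonal A. - (p u * ln (p u)))"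
      using nonneg ln_le_zero by (intro sum.cong) (auto simp: b_def mult_nonneg_nonpos)
    then show ?thesis
      by (simp add: sum_off_diagonal_fst[OF finite] shannon_entropy_def sum_negf)
  qed
  also have "(\<Sum>u\<in>A. (1 - p u) / - ln (p u)) * ((real (card A) - 1) * shannon_entropy A p)
      \<le> (real (card A) - 1) / ln (real (card A)) * ((real (card A) - 1) * shannon_entropy A p)"
    using sum_one_minus_div_neg_ln_le[OF assms] entropy_nonneg assms
    by (intro mult_right_mono) auto
  finally show ?thesis
    by (simp add: power2_eq_square mult.assoc)
qed

lemma normalized_bounds:
  assumes "card A \<ge> 2"
  defines "z \<equiv> pairwise_affinity A p / (real (card A) - 1)"
    and "k \<equiv> pairwise_distance A p / (real (card A) - 1)"
    and "h \<equiv> shannon_entropy A p / ln (real (card A))"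
  shows "0 \<le> z" "z\<^sup>2 \<le> h" "h \<le> log (real (card A)) (1 + (real (card A) - 1) * z)"
    "1 \<le> k + z" "k\<^sup>2 + z\<^sup>2 \<le> 1"
proof -
  have c: "real (card A) - 1 \<ge> 1" and lnL: "ln (real (card A)) > 0"
    using assms(1) by auto
  show "0 \<le> z" using affinity_nonneg c by (simp add: z_def)
  show "z\<^sup>2 \<le> h"
    using affinity_sq_le_entropy[OF assms(1)] c lnL
    by (simp add: z_def h_def power_divide field_simps)
  show "h \<le> log (real (card A)) (1 + (real (card A) - 1) * z)"
    using entropy_le_ln_one_plus_affinity c lnL
    by (simp add: z_def h_def log_def divide_right_mono)
  show "1 \<le> k + z"
    using card_minus_one_le_distance_plus_affinity c
    by (simp add: z_def k_def add_divide_distrib[symmetric])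
  show "k\<^sup>2 + z\<^sup>2 \<le> 1"
    using distance_sq_plus_affinity_sq_le c
    by (simp add: z_def k_def power_divide add_divide_distrib[symmetric])
qed

lemma mean_sq_le: "(\<Sum>u\<in>A. p u * f u)\<^sup>2 \<le> (\<Sum>u\<in>A. p u * (f u)\<^sup>2)"
  using convex_on_sum[OF finite nonempty convex_power2 sum_eq_1 nonneg, of f] by simp

lemma mean_bounds:
  fixes z k h :: "'a \<Rightarrow> real" and b c :: real
  assumes "b > 1" "c \<ge> 0"
    and "\<And>u. u \<in> A \<Longrightarrow> 0 \<le> z u"
    and "\<And>u. u \<in> A \<Longrightarrow> (z u)\<^sup>2 \<le> h u"
    and "\<And>u. u \<in> A \<Longrightarrow> h u \<le> log b (1 + c * z u)"
    and "\<And>u. u \<in> A \<Longrightarrow> 1 \<le> k u + z u"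
    and "\<And>u. u \<in> A \<Longrightarrow> (k u)\<^sup>2 + (z u)\<^sup>2 \<le> 1"
  defines "Z \<equiv> \<Sum>u\<in>A. p u * z u" and "K \<equiv> \<Sum>u\<in>A. p u * k u" and "H \<equiv> \<Sum>u\<in>A. p u * h u"
  shows "Z\<^sup>2 \<le> H \<and> H \<le> log b (1 + c * Z) \<and> 1 - Z \<le> K \<and> K \<le> sqrt (1 - Z\<^sup>2)"
proof (intro conjI)
  have mono: "(\<Sum>u\<in>A. p u * f u) \<le> (\<Sum>u\<in>A. p u * g u)"
    if "\<And>u. u \<in> A \<Longrightarrow> f u \<le> g u" for f g
    using that nonneg by (intro sum_mono mult_left_mono) auto
  have affine: "(\<Sum>u\<in>A. p u * (x + y * f u)) = x + y * (\<Sum>u\<in>A. p u * f u)" for x y f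
    using sum_eq_1
    by (simp add: distrib_left sum.distrib mult.left_commute flip: sum_distrib_left sum_distrib_right)
  show "Z\<^sup>2 \<le> H"
    using mean_sq_le[of z] mono[of "\<lambda>u. (z u)\<^sup>2" h] assms(4) by (simp add: Z_def H_def)
  have "H \<le> (\<Sum>u\<in>A. p u * log b (1 + c * z u))"
    using mono assms(5) by (simp add: H_def)
  also have "\<dots> \<le> log b (\<Sum>u\<in>A. p u * (1 + c * z u))"
    using concave_on_sum[OF finite nonempty log_concave[OF assms(1)] sum_eq_1 nonneg,
        of "\<lambda>u. 1 + c * z u"] sum_eq_1 assms(2,3)
    by (force intro: add_pos_nonneg)
  finally show "H \<le> log b (1 + c * Z)"
    by (simp add: affine Z_def)
  show "1 - Z \<le> K"
    using mono[of "\<lambda>_. 1" "\<lambda>u. k u + z u"] assms(6) affine[of 0 1 k] affine[of 0 1 z]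
    by (simp add: K_def Z_def sum_eq_1 sum.distrib distrib_left)
  have "(\<Sum>u\<in>A. p u * (k u)\<^sup>2) \<le> (\<Sum>u\<in>A. p u * (1 + (-1) * (z u)\<^sup>2))"
    by (rule mono) (use assms(7) in fastforce)
  then have "K\<^sup>2 \<le> 1 - (\<Sum>u\<in>A. p u * (z u)\<^sup>2)"
    using mean_sq_le[of k] unfolding affine K_def by linarith
  also have "\<dots> \<le> 1 - Z\<^sup>2"
    using mean_sq_le[of z] by (simp add: Z_def)
  finally show "K \<le> sqrt (1 - Z\<^sup>2)"
    using real_sqrt_le_mono real_sqrt_abs by fastforce
qed

end

lemma Zcond_eq_mean:
  "Zcond UU QQ PQ W = (\<Sum>q\<in>QQ. PQ q * (pairwise_affinity UU (W q) / (real (card UU) - 1)))"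
  unfolding Zcond_def pairwise_affinity_def
  by (simp add: sum_distrib_left sum_divide_distrib split_def)

lemma Kcond_eq_mean:
  "Kcond UU QQ PQ W = (\<Sum>q\<in>QQ. PQ q * (pairwise_distance UU (W q) / (real (card UU) - 1)))"
  unfolding Kcond_def pairwise_distance_def
  by (simp add: sum_distrib_left sum_divide_distrib split_def mult.commute)

lemma Hcond_eq_mean:
  "Hcond UU QQ PQ W = (\<Sum>q\<in>QQ. PQ q * (shannon_entropy UU (W q) / ln (real (card UU))))"
  unfolding Hcond_def shannon_entropy_def
  by (simp add: sum_negf[symmetric] sum_distrib_left sum_divide_distrib log_def mult.assoc)

theorem lemma9:
  fixes UU :: "'u set" and QQ :: "'q set"
    and PQ :: "'q \<Rightarrow> real" and W :: "'q \<Rightarrow> 'u \<Rightarrow> real" and L :: nat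
  assumes "finite UU" and "card UU = L" and "L \<ge> 2"
    and "finite QQ"
    and "\<forall>q\<in>QQ. PQ q \<ge> 0" and "(\<Sum>q\<in>QQ. PQ q) = 1"
    and "\<forall>q\<in>QQ. \<forall>u\<in>UU. W q u \<ge> 0"
    and "\<forall>q\<in>QQ. (\<Sum>u\<in>UU. W q u) = 1"
  shows "(Zcond UU QQ PQ W)\<^sup>2 \<le> Hcond UU QQ PQ W
       \<and> Hcond UU QQ PQ W \<le> log (real L) (1 + (real L - 1) * Zcond UU QQ PQ W)
       \<and> 1 - Zcond UU QQ PQ W \<le> Kcond UU QQ PQ W
       \<and> Kcond UU QQ PQ W \<le> sqrt (1 - (Zcond UU QQ PQ W)\<^sup>2)"
proof -
  interpret Q: prob_vector QQ PQ
    using assms(4-6) by unfold_locales auto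
  have W: "prob_vector UU (W q)" if "q \<in> QQ" for q
    using assms(1,7,8) that by unfold_locales auto
  note bounds = prob_vector.normalized_bounds[OF W, unfolded assms(2), OF _ assms(3)]
  show ?thesis
    unfolding Zcond_eq_mean Kcond_eq_mean Hcond_eq_mean assms(2)
    using assms(3) by (intro Q.mean_bounds bounds) auto
qed

end
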